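(* Let $(V_1,\dots,V_n)$ be an $n$-tuple of doubly non-commuting isometries on a Hilbert space $H$. For $A\subseteq\{1,\dots,n\}$ put $P_A=\prod_{i\in A}P_i^{\mathrm{iso}}\prod_{i\in A^c}P_i^{\mathrm{uni}}$ and $H_A=P_A(H)$. Then $H_A=\bigcap_{i\in A}H^{\mathrm{iso}}(V_i)\cap\bigcap_{i\in A^c}H^{\mathrm{uni}}(V_i)$, and $H=\bigoplus_{A\subseteq\{1,\dots,n\}}H_A$ is an orthogonal Hilbert direct sum in which every $H_A$ reduces every $V_i$; for all $A$ and $i$, $V_i|_{H_A}$ is a pure isometry if $i\in A$ and unitary if $i\in A^c$. Furthermore, if $L$ is a subspace of $H$ reducing all of $V_1,\dots,V_n$ and $A\subseteq\{1,\dots,n\}$, with $P_L$ the projection onto $L$, the following are equivalent: (1) $V_i|_L$ is a pure isometry for all $i\in A$ and unitary for all $i\in A^c$; (2) $L\subseteq H_A$; (3) $P_LP_A=P_L$.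
   Context: Fix $n\ge1$ and $z_{ij}\in\mathbb T$ ($i\ne j$) with $z_{ji}=\overline{z_{ij}}$; $(V_1,\dots,V_n)$ is doubly non-commuting if the $V_i$ are isometries with $V_i^*V_j=\overline{z_{ij}}V_jV_i^*$ for $i\ne j$. Subspaces are closed, projections orthogonal, $A^c$ is the complement of $A$ in $\{1,\dots,n\}$, empty products are the identity. For an isometry $S$: $H^{\mathrm{iso}}(S)=\bigoplus_{k\ge0}S^k(\ker S^* )$ (orthogonal sum) and $H^{\mathrm{uni}}(S)=\bigcap_{k\ge0}S^k(H)$; $P_i^{\mathrm{iso}},P_i^{\mathrm{uni}}$ are the projections onto $H^{\mathrm{iso}}(V_i),H^{\mathrm{uni}}(V_i)$ (these $2n$ projections commute pairwise, so the order in $P_A$ is irrelevant). For an invariant subspace $L$, $S|_L$ is a pure isometry if $\{0\}$ is the only $S$-invariant subspace of $L$ on which $S$ is unitary. *)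

theory Defs
  imports "HOL-Analysis.Analysis"
begin

class complex_vector = real_vector +
  fixes scaleC :: "complex \<Rightarrow> 'a \<Rightarrow> 'a"  (infixr \<open>*\<^sub>C\<close> 75)
  assumes scaleC_add_right: "a *\<^sub>C (x + y) = a *\<^sub>C x + a *\<^sub>C y"
    and scaleC_add_left: "(a + b) *\<^sub>C x = a *\<^sub>C x + b *\<^sub>C x"
    and scaleC_scaleC: "a *\<^sub>C (b *\<^sub>C x) = (a * b) *\<^sub>C x"
    and scaleC_one: "1 *\<^sub>C x = x"
    and scaleR_scaleC: "scaleR r x = complex_of_real r *\<^sub>C x"

class complex_inner = complex_vector + real_normed_vector +
  fixes cinner :: "'a \<Rightarrow> 'a \<Rightarrow> complex"
  assumes cinner_commute: "cinner x y = cnj (cinner y x)"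
    and cinner_add_left: "cinner (x + y) z = cinner x z + cinner y z"
    and cinner_scaleC_left: "cinner (a *\<^sub>C x) y = cnj a * cinner x y"
    and cinner_pos: "Im (cinner x x) = 0 \<and> Re (cinner x x) \<ge> 0"
    and cinner_eq_zero_iff: "cinner x x = 0 \<longleftrightarrow> x = 0"
    and norm_eq_sqrt_cinner: "norm x = sqrt (Re (cinner x x))"

class chilbert_space = complex_inner + complete_space

definition csubspace :: "'a::complex_vector set \<Rightarrow> bool" where
  "csubspace S \<longleftrightarrow> 0 \<in> S \<and> (\<forall>x\<in>S. \<forall>y\<in>S. x + y \<in> S) \<and> (\<forall>c. \<forall>x\<in>S. c *\<^sub>C x \<in> S)"

text \<open>Subspace = closed linear subspace.\<close>
definition closed_csubspace :: "'a::complex_inner set \<Rightarrow> bool" where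
  "closed_csubspace S \<longleftrightarrow> csubspace S \<and> closed S"

definition cspan :: "'a::complex_vector set \<Rightarrow> 'a set" where
  "cspan X = \<Inter>{S. csubspace S \<and> X \<subseteq> S}"

text \<open>Closed linear span (the Hilbert space sum of a family of subspaces).\<close>
definition ccspan :: "'a::complex_inner set \<Rightarrow> 'a set" where
  "ccspan X = closure (cspan X)"

definition orthogonal_sets :: "'a::complex_inner set \<Rightarrow> 'a set \<Rightarrow> bool" where
  "orthogonal_sets S T \<longleftrightarrow> (\<forall>x\<in>S. \<forall>y\<in>T. cinner x y = 0)"

definition proj :: "'a::complex_inner set \<Rightarrow> 'a \<Rightarrow> 'a" where
  "proj M x = (THE y. y \<in> M \<and> (\<forall>m\<in>M. cinner m (x - y) = 0))"

definition clinear :: "('a::complex_vector \<Rightarrow> 'b::complex_vector) \<Rightarrow> bool" where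
  "clinear f \<longleftrightarrow> (\<forall>x y. f (x + y) = f x + f y) \<and> (\<forall>c x. f (c *\<^sub>C x) = c *\<^sub>C f x)"

definition adj :: "('a::complex_inner \<Rightarrow> 'a) \<Rightarrow> ('a \<Rightarrow> 'a)" where
  "adj T = (SOME S. \<forall>x y. cinner (T x) y = cinner x (S y))"

definition isometry :: "('a::complex_inner \<Rightarrow> 'a) \<Rightarrow> bool" where
  "isometry V \<longleftrightarrow> clinear V \<and> (\<forall>x. norm (V x) = norm x)"

definition ker :: "('a::complex_vector \<Rightarrow> 'a) \<Rightarrow> 'a set" where
  "ker T = {x. T x = 0}"

text \<open>H^iso(S): the orthogonal sum of the S^k(ker S^*), k \<ge> 0, i.e. their closed span.\<close>
definition Hiso :: "('a::complex_inner \<Rightarrow> 'a) \<Rightarrow> 'a set" where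
  "Hiso S = ccspan (\<Union>k. (S ^^ k) ` ker (adj S))"

definition Huni :: "('a::complex_inner \<Rightarrow> 'a) \<Rightarrow> 'a set" where
  "Huni S = (\<Inter>k. range (S ^^ k))"

definition doubly_noncommuting ::
    "nat \<Rightarrow> (nat \<Rightarrow> nat \<Rightarrow> complex) \<Rightarrow> (nat \<Rightarrow> 'a::complex_inner \<Rightarrow> 'a) \<Rightarrow> bool" where
  "doubly_noncommuting n z V \<longleftrightarrow>
     (\<forall>i\<in>{1..n}. isometry (V i)) \<and>
     (\<forall>i\<in>{1..n}. \<forall>j\<in>{1..n}. i \<noteq> j \<longrightarrow>
        (\<forall>x. adj (V i) (V j x) = cnj (z i j) *\<^sub>C V j (adj (V i) x)))"

definition reduces :: "'a set \<Rightarrow> ('a::complex_inner \<Rightarrow> 'a) \<Rightarrow> bool" where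
  "reduces L T \<longleftrightarrow> T ` L \<subseteq> L \<and> adj T ` L \<subseteq> L"

text \<open>The restriction of (an isometry) S to the S-invariant subspace L is unitary: S maps L onto L.\<close>
definition unitary_on :: "('a::complex_inner \<Rightarrow> 'a) \<Rightarrow> 'a set \<Rightarrow> bool" where
  "unitary_on S L \<longleftrightarrow> S ` L = L"

definition pure_on :: "('a::complex_inner \<Rightarrow> 'a) \<Rightarrow> 'a set \<Rightarrow> bool" where
  "pure_on S L \<longleftrightarrow> S ` L \<subseteq> L \<and>
     (\<forall>M. closed_csubspace M \<and> M \<subseteq> L \<and> S ` M \<subseteq> M \<and> unitary_on S M \<longrightarrow> M = {0})"

text \<open>P_A = prod_{i in A} P_i^iso prod_{i in A^c} P_i^uni (complement in {1..n});
  the factors commute, we compose them in the order i = 1, ..., n.\<close>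
definition P_set :: "nat \<Rightarrow> (nat \<Rightarrow> 'a::complex_inner \<Rightarrow> 'a) \<Rightarrow> nat set \<Rightarrow> 'a \<Rightarrow> 'a" where
  "P_set n V A = foldr (\<circ>)
     (map (\<lambda>i. if i \<in> A then proj (Hiso (V i)) else proj (Huni (V i))) [1..<Suc n]) id"

definition H_set :: "nat \<Rightarrow> (nat \<Rightarrow> 'a::complex_inner \<Rightarrow> 'a) \<Rightarrow> nat set \<Rightarrow> 'a set" where
  "H_set n V A = range (P_set n V A)"

end

theory Submission
  imports Defs
begin

text \<open>For a single isometry \<open>V\<close> the Wold decomposition says that \<open>H\<^sup>u\<^sup>n\<^sup>i(V)\<close> and
  \<open>H\<^sup>i\<^sup>s\<^sup>o(V)\<close> are orthogonal complements of each other, both reduce \<open>V\<close>, and a reducing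
  subspace \<open>L\<close> carries a pure (unitary) restriction of \<open>V\<close> exactly when \<open>L \<subseteq> H\<^sup>i\<^sup>s\<^sup>o(V)\<close>
  (\<open>L \<subseteq> H\<^sup>u\<^sup>n\<^sup>i(V)\<close>). For a doubly non-commuting tuple the defining relations
  force \<open>V\<^sub>iV\<^sub>j = z\<^sub>i\<^sub>jV\<^sub>jV\<^sub>i\<close> (the difference is annihilated by \<open>V\<^sub>i\<^sup>*\<close> and \<open>V\<^sub>j\<^sup>*\<close>); both
  relations together let \<open>V\<^sub>j\<close> and \<open>V\<^sub>j\<^sup>*\<close> map each \<open>V\<^sub>i\<^sup>k(H)\<close> into itself, so \<open>H\<^sup>u\<^sup>n\<^sup>i(V\<^sub>i)\<close> and its
  complement \<open>H\<^sup>i\<^sup>s\<^sup>o(V\<^sub>i)\<close> reduce every \<open>V\<^sub>j\<close>. Hence all \<open>2n\<close> Wold projections commute,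
  \<open>P\<^sub>A\<close> is the projection onto the intersection of its factors' ranges, expanding
  \<open>\<Prod>\<^sub>i (P\<^sub>i\<^sup>i\<^sup>s\<^sup>o + P\<^sub>i\<^sup>u\<^sup>n\<^sup>i) = I\<close> shows that the \<open>H\<^sub>A\<close> span \<open>H\<close>, and complementary factors make
  them pairwise orthogonal. The characterisation of reducing subspaces then reduces
  coordinatewise to the single-isometry case.\<close>

declare scaleC_one [simp] cinner_eq_zero_iff [simp]

lemma scaleC_zero_left [simp]: "0 *\<^sub>C x = (0::'a::complex_vector)"
  by (metis scaleR_scaleC scaleR_zero_left of_real_0)

lemma scaleC_zero_right [simp]: "c *\<^sub>C (0::'a::complex_vector) = 0"
  by (metis add_cancel_right_right scaleC_add_right add_0)

lemma scaleC_minus_right: "c *\<^sub>C (- x) = - (c *\<^sub>C (x::'a::complex_vector))"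
  by (metis add.right_inverse eq_neg_iff_add_eq_0 scaleC_add_right scaleC_zero_right)

lemma scaleC_diff_right: "c *\<^sub>C (x - y) = c *\<^sub>C x - c *\<^sub>C (y::'a::complex_vector)"
  by (metis diff_conv_add_uminus scaleC_add_right scaleC_minus_right)

lemma scaleC_minus_left: "(- c) *\<^sub>C x = - (c *\<^sub>C (x::'a::complex_vector))"
  by (metis add.right_inverse eq_neg_iff_add_eq_0 scaleC_add_left scaleC_zero_left)

lemma cinner_add_right: "cinner x (y + z) = cinner x y + cinner x (z::'a::complex_inner)"
  by (metis cinner_add_left cinner_commute complex_cnj_add)

lemma cinner_scaleC_right: "cinner x (c *\<^sub>C y) = c * cinner x (y::'a::complex_inner)"
  by (metis cinner_commute cinner_scaleC_left complex_cnj_cnj complex_cnj_mult)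

lemma cinner_zero_left [simp]: "cinner 0 (y::'a::complex_inner) = 0"
  by (metis add_cancel_right_right cinner_add_left add_0)

lemma cinner_zero_right [simp]: "cinner (x::'a::complex_inner) 0 = 0"
  by (metis cinner_commute cinner_zero_left complex_cnj_zero)

lemma cinner_minus_left: "cinner (- x) (y::'a::complex_inner) = - cinner x y"
  by (metis add.right_inverse cinner_add_left cinner_zero_left eq_neg_iff_add_eq_0)

lemma cinner_minus_right: "cinner x (- y) = - cinner x (y::'a::complex_inner)"
  by (metis add.right_inverse cinner_add_right cinner_zero_right eq_neg_iff_add_eq_0)

lemma cinner_diff_left: "cinner (x - y) (z::'a::complex_inner) = cinner x z - cinner y z"
  by (metis cinner_add_left cinner_minus_left diff_conv_add_uminus)

lemma cinner_diff_right: "cinner x (y - z) = cinner x y - cinner x (z::'a::complex_inner)"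
  by (metis cinner_add_right cinner_minus_right diff_conv_add_uminus)

lemma cinner_eq_0_commute: "cinner x y = 0 \<longleftrightarrow> cinner y (x::'a::complex_inner) = 0"
  by (metis cinner_commute complex_cnj_zero_iff)

lemma Re_cinner_self: "Re (cinner x (x::'a::complex_inner)) = (norm x)\<^sup>2"
  by (simp add: norm_eq_sqrt_cinner cinner_pos)

lemma cinner_self: "cinner x (x::'a::complex_inner) = complex_of_real ((norm x)\<^sup>2)"
  by (rule complex_eqI) (simp_all add: Re_cinner_self cinner_pos)

lemma norm_scaleC: "norm (c *\<^sub>C x) = cmod c * norm (x::'a::complex_inner)"
proof -
  have "complex_of_real ((norm (c *\<^sub>C x))\<^sup>2) = cnj c * c * complex_of_real ((norm x)\<^sup>2)"
    by (metis cinner_self cinner_scaleC_left cinner_scaleC_right mult.assoc)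
  also have "cnj c * c = complex_of_real ((cmod c)\<^sup>2)"
    by (metis complex_norm_square mult.commute)
  finally have "(norm (c *\<^sub>C x))\<^sup>2 = (cmod c * norm x)\<^sup>2"
    by (metis of_real_eq_iff of_real_mult power_mult_distrib)
  then show ?thesis by (rule power2_eq_imp_eq) auto
qed

lemma eq_if_cinner_eq: "(\<And>x. cinner x a = cinner x b) \<Longrightarrow> a = (b::'a::complex_inner)"
proof -
  assume "\<And>x. cinner x a = cinner x b"
  then have "cinner (a - b) (a - b) = 0" by (simp add: cinner_diff_right)
  then show ?thesis by simp
qed

lemma norm_add_square:
  "(norm (x + y))\<^sup>2 = (norm x)\<^sup>2 + (norm y)\<^sup>2 + 2 * Re (cinner x (y::'a::complex_inner))"
proof -
  have "Re (cinner y x) = Re (cinner x y)" by (subst cinner_commute) simp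
  then show ?thesis
    by (simp add: Re_cinner_self[symmetric] cinner_add_left cinner_add_right)
qed

lemma parallelogram_law:
  "(norm (x + y))\<^sup>2 + (norm (x - y))\<^sup>2 = 2 * (norm x)\<^sup>2 + 2 * (norm (y::'a::complex_inner))\<^sup>2"
  using norm_add_square[of x y] norm_add_square[of x "- y"] by (simp add: cinner_minus_right)

lemma norm_diff_proj_line_square:
  fixes x y :: "'a::complex_inner"
  assumes "y \<noteq> 0"
  shows "(norm (x - (cinner y x / cinner y y) *\<^sub>C y))\<^sup>2 = (norm x)\<^sup>2 - (cmod (cinner y x))\<^sup>2 / (norm y)\<^sup>2"
proof -
  define a N where "a = cinner y x" and "N = (norm y)\<^sup>2"
  define c where "c = a / of_real N"
  have N: "N > 0" using assms by (simp add: N_def)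
  have yy: "cinner y y = of_real N" by (simp add: N_def cinner_self)
  have xy: "cinner x y = cnj a" by (simp add: a_def cinner_commute[of x])
  have "cinner (x - c *\<^sub>C y) (x - c *\<^sub>C y)
      = cinner x x - c * cnj a - cnj c * a + cnj c * c * of_real N"
    by (simp add: cinner_diff_left cinner_diff_right cinner_scaleC_left cinner_scaleC_right
        xy yy a_def algebra_simps)
  also have "\<dots> = cinner x x - (a * cnj a) / of_real N"
    using N by (simp add: c_def field_simps)
  also have "a * cnj a = of_real ((cmod a)\<^sup>2)" by (metis complex_norm_square)
  finally have "Re (cinner (x - c *\<^sub>C y) (x - c *\<^sub>C y)) = (norm x)\<^sup>2 - (cmod a)\<^sup>2 / N"
    by (simp add: Re_cinner_self)
  then show ?thesis by (simp add: Re_cinner_self c_def a_def N_def yy)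
qed

lemma cinner_cauchy_schwarz: "cmod (cinner x y) \<le> norm x * norm (y::'a::complex_inner)"
proof (cases "x = 0")
  case False
  have "(cmod (cinner x y))\<^sup>2 / (norm x)\<^sup>2 \<le> (norm y)\<^sup>2"
    using norm_diff_proj_line_square[OF False, of y] by (metis diff_ge_0_iff_ge zero_le_power2)
  then have "(cmod (cinner x y))\<^sup>2 \<le> (norm x * norm y)\<^sup>2"
    using False by (simp add: divide_le_eq power_mult_distrib mult.commute)
  then show ?thesis by (rule power2_le_imp_le) simp
qed simp

lemma bounded_linear_cinner_right: "bounded_linear (\<lambda>y. cinner (m::'a::complex_inner) y)"
proof (rule bounded_linear_intro[where K = "norm m"])
  show "cinner m (r *\<^sub>R x) = r *\<^sub>R cinner m x" for r x
    by (simp add: scaleR_scaleC cinner_scaleC_right scaleR_conv_of_real)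
  show "norm (cinner m x) \<le> norm x * norm m" for x
    using cinner_cauchy_schwarz[of m x] by (simp add: mult.commute)
qed (rule cinner_add_right)

lemma bounded_linear_scaleC: "bounded_linear (\<lambda>x. c *\<^sub>C (x::'a::complex_inner))"
proof (rule bounded_linear_intro[where K = "cmod c"])
  show "c *\<^sub>C (r *\<^sub>R x) = r *\<^sub>R (c *\<^sub>C x)" for r x
    by (simp add: scaleR_scaleC scaleC_scaleC mult.commute)
  show "norm (c *\<^sub>C x) \<le> norm x * cmod c" for x :: 'a by (simp add: norm_scaleC mult.commute)
qed (rule scaleC_add_right)

lemma clinear_zero: "clinear f \<Longrightarrow> f 0 = 0"
  by (metis clinear_def scaleC_zero_left)

lemma clinear_add: "clinear f \<Longrightarrow> f (x + y) = f x + f y"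
  by (simp add: clinear_def)

lemma clinear_scaleC: "clinear f \<Longrightarrow> f (c *\<^sub>C x) = c *\<^sub>C f x"
  by (simp add: clinear_def)

lemma clinear_diff: "clinear f \<Longrightarrow> f (x - y) = f x - f (y::'a::complex_vector)"
  by (metis clinear_add diff_add_cancel eq_diff_eq)

lemma csubspace_0: "csubspace S \<Longrightarrow> 0 \<in> S"
  by (simp add: csubspace_def)

lemma csubspace_add: "csubspace S \<Longrightarrow> x \<in> S \<Longrightarrow> y \<in> S \<Longrightarrow> x + y \<in> S"
  by (simp add: csubspace_def)

lemma csubspace_scaleC: "csubspace S \<Longrightarrow> x \<in> S \<Longrightarrow> c *\<^sub>C x \<in> S"
  by (simp add: csubspace_def)

lemma csubspace_diff: "csubspace S \<Longrightarrow> x \<in> S \<Longrightarrow> y \<in> S \<Longrightarrow> x - y \<in> (S::'a::complex_vector set)"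
  by (metis csubspace_add csubspace_scaleC diff_conv_add_uminus scaleC_minus_left scaleC_one)

lemma csubspace_scaleR: "csubspace S \<Longrightarrow> x \<in> S \<Longrightarrow> r *\<^sub>R x \<in> (S::'a::complex_vector set)"
  by (simp add: csubspace_scaleC scaleR_scaleC)

lemma csubspace_range: "clinear f \<Longrightarrow> csubspace (range f)"
  unfolding csubspace_def
  by (auto simp: image_iff clinear_zero clinear_add[symmetric] clinear_scaleC[symmetric]
      intro: exI[where x=0])

lemma closed_csubspace_Inter:
  "(\<And>i. i \<in> I \<Longrightarrow> closed_csubspace (M i)) \<Longrightarrow> closed_csubspace (\<Inter>i\<in>I. M i)"
  unfolding closed_csubspace_def csubspace_def by (auto intro!: closed_INT)

lemma closed_csubspace_Int:
  "closed_csubspace A \<Longrightarrow> closed_csubspace B \<Longrightarrow> closed_csubspace (A \<inter> B)"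
  unfolding closed_csubspace_def csubspace_def by auto

lemma closed_csubspace_UNIV: "closed_csubspace UNIV"
  by (simp add: closed_csubspace_def csubspace_def)

definition orth :: "'a::complex_inner set \<Rightarrow> 'a set" where
  "orth M = {x. \<forall>m\<in>M. cinner m x = 0}"

lemma closed_csubspace_orth: "closed_csubspace (orth (M::'a::complex_inner set))"
proof -
  have "csubspace (orth M)"
    by (auto simp: csubspace_def orth_def cinner_add_right cinner_scaleC_right)
  moreover have "orth M = (\<Inter>m\<in>M. (\<lambda>y. cinner m y) -` {0})"
    by (auto simp: orth_def)
  moreover have "closed ((\<lambda>y. cinner m y) -` {0})" for m
    by (intro closed_vimage closed_singleton linear_continuous_on bounded_linear_cinner_right)
  ultimately show ?thesis by (auto simp: closed_csubspace_def)
qed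

lemma orth_Int_zero: "x \<in> M \<Longrightarrow> x \<in> orth M \<Longrightarrow> x = (0::'a::complex_inner)"
  unfolding orth_def using cinner_eq_zero_iff by blast

section \<open>Orthogonal projections\<close>

lemma minimizing_sequence_Cauchy:
  fixes M :: "'a::complex_inner set" and ms :: "nat \<Rightarrow> 'a"
  assumes M: "csubspace M" and d: "0 \<le> d" "\<And>m. m \<in> M \<Longrightarrow> d \<le> norm (x - m)"
    and ms: "\<And>k. ms k \<in> M" "\<And>k. (norm (x - ms k))\<^sup>2 < d\<^sup>2 + inverse (real (Suc k))"
  shows "Cauchy ms"
proof (rule CauchyI)
  have close: "(norm (ms j - ms k))\<^sup>2 \<le> 2 * inverse (real (Suc j)) + 2 * inverse (real (Suc k))"
    for j k
  proof -
    \<comment> \<open>the midpoint of \<open>ms j\<close> and \<open>ms k\<close> lies in \<open>M\<close>, so it is at distance \<open>\<ge> d\<close> from \<open>x\<close>\<close>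
    have "(1/2) *\<^sub>R (ms j + ms k) \<in> M" by (intro csubspace_scaleR csubspace_add M ms)
    then have "d \<le> norm (x - (1/2) *\<^sub>R (ms j + ms k))" by (rule d(2))
    also have "x - (1/2) *\<^sub>R (ms j + ms k) = (1/2) *\<^sub>R ((x - ms j) + (x - ms k))"
      by (simp add: scaleR_add_right scaleR_diff_right flip: scaleR_add_left)
    finally have "(2 * d)\<^sup>2 \<le> (norm ((x - ms j) + (x - ms k)))\<^sup>2"
      using d(1) by (intro power_mono) auto
    moreover have "(x - ms j) - (x - ms k) = - (ms j - ms k)" by simp
    ultimately show ?thesis
      using parallelogram_law[of "x - ms j" "x - ms k"] ms(2)[of j] ms(2)[of k]
      by (simp add: power_mult_distrib norm_minus_commute)
  qed
  fix e :: real assume e: "0 < e"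
  obtain N :: nat where N: "4 / e\<^sup>2 < real N" using reals_Archimedean2 by blast
  have "norm (ms j - ms k) < e" if "N \<le> j" "N \<le> k" for j k
  proof -
    have "inverse (real (Suc j)) \<le> inverse (real (Suc N))"
      and "inverse (real (Suc k)) \<le> inverse (real (Suc N))"
      using that by (simp_all add: field_simps)
    then have "(norm (ms j - ms k))\<^sup>2 \<le> 4 * inverse (real (Suc N))" using close[of j k] by linarith
    also have "\<dots> < e\<^sup>2"
    proof -
      have "4 / e\<^sup>2 < real (Suc N)" using N by simp
      then show ?thesis using e by (simp add: field_simps)
    qed
    finally show ?thesis using e by (simp add: power_less_imp_less_base)
  qed
  then show "\<exists>M. \<forall>m\<ge>M. \<forall>n\<ge>M. norm (ms m - ms n) < e" by blast
qed

lemma nearest_point_exists: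
  fixes M :: "'a::chilbert_space set"
  assumes M: "closed_csubspace M"
  shows "\<exists>y\<in>M. \<forall>m\<in>M. norm (x - y) \<le> norm (x - m)"
proof -
  have cs: "csubspace M" and cl: "closed M" using M by (auto simp: closed_csubspace_def)
  define D where "D = (\<lambda>m. norm (x - m)) ` M"
  define d where "d = Inf D"
  have ne: "D \<noteq> {}" using csubspace_0[OF cs] by (auto simp: D_def)
  have bdd: "bdd_below D" by (auto simp: D_def intro!: bdd_belowI[where m=0])
  have dle: "d \<le> norm (x - m)" if "m \<in> M" for m
    unfolding d_def using bdd that by (auto simp: D_def intro!: cInf_lower)
  have d0: "0 \<le> d" unfolding d_def using ne by (auto simp: D_def intro!: cInf_greatest)
  have "\<exists>m\<in>M. (norm (x - m))\<^sup>2 < d\<^sup>2 + inverse (real (Suc k))" for k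
  proof -
    have "d < sqrt (d\<^sup>2 + inverse (real (Suc k)))" by (intro real_less_rsqrt) simp
    then obtain t where "t \<in> D" "t < sqrt (d\<^sup>2 + inverse (real (Suc k)))"
      using cInf_lessD[OF ne] unfolding d_def by blast
    then obtain m where m: "m \<in> M" "norm (x - m) < sqrt (d\<^sup>2 + inverse (real (Suc k)))"
      unfolding D_def by blast
    have "(norm (x - m))\<^sup>2 < (sqrt (d\<^sup>2 + inverse (real (Suc k))))\<^sup>2"
      using m(2) by (intro power_strict_mono) auto
    with m(1) show ?thesis by auto
  qed
  then obtain ms where ms: "\<And>k. ms k \<in> M" "\<And>k. (norm (x - ms k))\<^sup>2 < d\<^sup>2 + inverse (real (Suc k))"
    by metis
  have "Cauchy ms" by (rule minimizing_sequence_Cauchy[OF cs d0 dle ms])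
  then obtain y where y: "ms \<longlonglongrightarrow> y" using Cauchy_convergent_iff convergent_def by blast
  have "y \<in> M" using closed_sequentially[OF cl ms(1) y] .
  moreover have "(norm (x - y))\<^sup>2 \<le> d\<^sup>2"
  proof (rule tendsto_le[OF trivial_limit_sequentially])
    show "(\<lambda>k. d\<^sup>2 + inverse (real (Suc k))) \<longlonglongrightarrow> d\<^sup>2"
      using tendsto_add[OF tendsto_const LIMSEQ_inverse_real_of_nat, of "d\<^sup>2"] by simp
    show "(\<lambda>k. (norm (x - ms k))\<^sup>2) \<longlonglongrightarrow> (norm (x - y))\<^sup>2" by (intro tendsto_intros y)
    show "\<forall>\<^sub>F k in sequentially. (norm (x - ms k))\<^sup>2 \<le> d\<^sup>2 + inverse (real (Suc k))"
      using ms(2) less_imp_le by (intro always_eventually) blast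
  qed
  then have "norm (x - y) \<le> d" using d0 by (rule power2_le_imp_le)
  ultimately show ?thesis using dle order_trans by blast
qed

lemma nearest_point_orthogonal:
  fixes M :: "'a::complex_inner set"
  assumes M: "csubspace M" and y: "y \<in> M" "\<forall>m\<in>M. norm (x - y) \<le> norm (x - m)"
    and m: "m \<in> M"
  shows "cinner m (x - y) = 0"
proof (cases "m = 0")
  case False
  define c where "c = cinner m (x - y) / cinner m m"
  have "y + c *\<^sub>C m \<in> M" by (intro csubspace_add csubspace_scaleC M y m)
  then have "norm (x - y) \<le> norm ((x - y) - c *\<^sub>C m)"
    using y(2) by (simp add: diff_diff_eq)
  then have "(norm (x - y))\<^sup>2 \<le> (norm ((x - y) - c *\<^sub>C m))\<^sup>2"
    by (simp add: power_mono)
  also have "\<dots> = (norm (x - y))\<^sup>2 - (cmod (cinner m (x - y)))\<^sup>2 / (norm m)\<^sup>2"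
    unfolding c_def by (rule norm_diff_proj_line_square[OF False])
  finally have "(cmod (cinner m (x - y)))\<^sup>2 / (norm m)\<^sup>2 \<le> 0" by simp
  then show ?thesis using False by (simp add: divide_le_0_iff)
qed simp

lemma orthogonal_decomposition_unique:
  assumes M: "csubspace M"
    and y: "y \<in> M" "\<forall>m\<in>M. cinner m (x - y) = 0" and y': "y' \<in> M" "\<forall>m\<in>M. cinner m (x - y') = 0"
  shows "y' = (y::'a::complex_inner)"
proof -
  have "y - y' \<in> M" by (rule csubspace_diff[OF M y(1) y'(1)])
  moreover have "cinner (y - y') (y - y') = cinner (y - y') (x - y') - cinner (y - y') (x - y)"
    by (simp add: cinner_diff_right)
  ultimately have "cinner (y - y') (y - y') = 0" using y y' by simp
  then show ?thesis by simp
qed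

context
  fixes M :: "'a::chilbert_space set"
  assumes M: "closed_csubspace M"
begin

lemma proj_unique: "y \<in> M \<Longrightarrow> (\<forall>m\<in>M. cinner m (x - y) = 0) \<Longrightarrow> proj M x = y"
  unfolding proj_def using M
  by (intro the_equality) (auto simp: closed_csubspace_def intro: orthogonal_decomposition_unique)

lemma proj_in: "proj M x \<in> M"
  and proj_orth: "m \<in> M \<Longrightarrow> cinner m (x - proj M x) = 0"
proof -
  have cs: "csubspace M" using M by (simp add: closed_csubspace_def)
  obtain y where y: "y \<in> M" "\<forall>m\<in>M. norm (x - y) \<le> norm (x - m)"
    using nearest_point_exists[OF M] by blast
  then have "\<forall>m\<in>M. cinner m (x - y) = 0" using nearest_point_orthogonal[OF cs] by blast
  with y have "proj M x = y" by (intro proj_unique)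
  with y show "proj M x \<in> M" and "m \<in> M \<Longrightarrow> cinner m (x - proj M x) = 0"
    using nearest_point_orthogonal[OF cs] by auto
qed

lemma proj_fixed: "m \<in> M \<Longrightarrow> proj M m = m"
  by (rule proj_unique) auto

lemma range_proj: "range (proj M) = M"
  using proj_in proj_fixed by (metis image_subsetI rangeI subsetI subset_antisym)

lemma proj_orth_in: "x - proj M x \<in> orth M"
  using proj_orth by (simp add: orth_def)

lemma proj_zero_on_orth: "x \<in> orth M \<Longrightarrow> proj M x = 0"
  using M by (intro proj_unique) (auto simp: orth_def closed_csubspace_def csubspace_0)

lemma proj_add: "proj M (x + y) = proj M x + proj M y"
proof (rule proj_unique)
  show "proj M x + proj M y \<in> M"
    using M by (intro csubspace_add proj_in) (simp add: closed_csubspace_def)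
  have "x + y - (proj M x + proj M y) = (x - proj M x) + (y - proj M y)" by simp
  then show "\<forall>m\<in>M. cinner m (x + y - (proj M x + proj M y)) = 0"
    using proj_orth by (simp only: cinner_add_right) simp
qed

lemma clinear_proj: "clinear (proj M)"
proof -
  have "proj M (c *\<^sub>C x) = c *\<^sub>C proj M x" for c x
  proof (rule proj_unique)
    show "c *\<^sub>C proj M x \<in> M"
      using M by (intro csubspace_scaleC proj_in) (simp add: closed_csubspace_def)
    show "\<forall>m\<in>M. cinner m (c *\<^sub>C x - c *\<^sub>C proj M x) = 0"
      by (simp add: scaleC_diff_right[symmetric] cinner_scaleC_right proj_orth)
  qed
  then show ?thesis by (simp add: clinear_def proj_add)
qed

lemma proj_selfadjoint: "cinner (proj M x) y = cinner x (proj M y)"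
proof -
  have "cinner (proj M x) (y - proj M y) = 0" and "cinner (x - proj M x) (proj M y) = 0"
    using proj_orth[OF proj_in] cinner_eq_0_commute by blast+
  then show ?thesis by (simp add: cinner_diff_left cinner_diff_right)
qed

lemma orth_orth: "orth (orth M) = M"
proof
  show "M \<subseteq> orth (orth M)"
    by (auto simp: orth_def cinner_eq_0_commute)
  show "orth (orth M) \<subseteq> M"
  proof
    fix y assume y: "y \<in> orth (orth M)"
    have w: "y - proj M y \<in> orth M" by (rule proj_orth_in)
    then have "cinner (y - proj M y) y = 0" and "cinner (y - proj M y) (proj M y) = 0"
      using y proj_in by (auto simp: orth_def cinner_eq_0_commute)
    then have "cinner (y - proj M y) (y - proj M y) = 0" by (simp add: cinner_diff_right)
    then have "y = proj M y" by simp
    then show "y \<in> M" by (metis proj_in)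
  qed
qed

end

lemma proj_orth_complement:
  fixes M :: "'a::chilbert_space set"
  assumes M: "closed_csubspace M"
  shows "proj (orth M) x = x - proj M x"
  using proj_in[OF M] orth_orth[OF M]
  by (intro proj_unique[OF closed_csubspace_orth] proj_orth_in[OF M]) (auto simp: orth_def)

lemma proj_UNIV: "proj UNIV x = (x::'a::chilbert_space)"
  by (rule proj_fixed[OF closed_csubspace_UNIV]) simp

lemma proj_subset_iff:
  fixes L N :: "'a::chilbert_space set"
  assumes L: "closed_csubspace L" and N: "closed_csubspace N"
  shows "L \<subseteq> N \<longleftrightarrow> proj L \<circ> proj N = proj L"
proof
  assume LN: "L \<subseteq> N"
  have "proj L (proj N x) = proj L x" for x
  proof (rule proj_unique[OF L proj_in[OF L]], intro ballI)
    fix m assume m: "m \<in> L"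
    have "proj N x - proj L x = (x - proj L x) - (x - proj N x)" by simp
    then show "cinner m (proj N x - proj L x) = 0"
      using proj_orth[OF L m] proj_orth[OF N, of m x] m LN by (auto simp: cinner_diff_right)
  qed
  then show "proj L \<circ> proj N = proj L" by auto
next
  assume eq: "proj L \<circ> proj N = proj L"
  show "L \<subseteq> N"
  proof
    fix l assume l: "l \<in> L"
    have "proj L (l - proj N l) = 0"
      using eq clinear_diff[OF clinear_proj[OF L]] by (metis comp_apply diff_self)
    then have "cinner (l - proj N l) l = 0"
      using proj_orth[OF L l, of "l - proj N l"] by (simp add: cinner_eq_0_commute)
    moreover have "cinner (l - proj N l) (proj N l) = 0"
      using proj_orth[OF N proj_in[OF N]] by (simp add: cinner_eq_0_commute)
    ultimately have "cinner (l - proj N l) (l - proj N l) = 0" by (simp add: cinner_diff_right)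
    then have "l = proj N l" by simp
    then show "l \<in> N" by (metis proj_in[OF N])
  qed
qed

lemma proj_orth_invariant:
  fixes M N :: "'a::chilbert_space set"
  assumes N: "closed_csubspace N" and inv: "proj N ` M \<subseteq> M"
  shows "proj N ` orth M \<subseteq> orth M"
proof (intro image_subsetI)
  fix y assume y: "y \<in> orth M"
  have "cinner m (proj N y) = cinner (proj N m) y" if "m \<in> M" for m
    by (simp add: proj_selfadjoint[OF N])
  then show "proj N y \<in> orth M" using y inv by (auto simp: orth_def)
qed

lemma proj_commute_if_invariant:
  fixes M N :: "'a::chilbert_space set"
  assumes M: "closed_csubspace M" and N: "closed_csubspace N" and inv: "proj N ` M \<subseteq> M"
  shows "proj M (proj N x) = proj N (proj M x)"
proof -
  have "proj N (x - proj M x) \<in> orth M"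
    using proj_orth_invariant[OF N inv] proj_orth_in[OF M] by blast
  then have "proj M (proj N (x - proj M x)) = 0" by (rule proj_zero_on_orth[OF M])
  moreover have "proj M (proj N (proj M x)) = proj N (proj M x)"
    using inv proj_in[OF M] by (intro proj_fixed[OF M]) blast
  ultimately show ?thesis
    by (simp add: clinear_diff[OF clinear_proj[OF M]] clinear_diff[OF clinear_proj[OF N]])
qed

lemma proj_comp_proj_eq_proj_Int:
  fixes M N :: "'a::chilbert_space set"
  assumes M: "closed_csubspace M" and N: "closed_csubspace N" and inv: "proj M ` N \<subseteq> N"
  shows "proj M \<circ> proj N = proj (M \<inter> N)"
proof
  fix x
  have comm: "proj N (proj M x) = proj M (proj N x)" by (rule proj_commute_if_invariant[OF N M inv])
  show "(proj M \<circ> proj N) x = proj (M \<inter> N) x"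
  proof (rule proj_unique[OF closed_csubspace_Int[OF M N], symmetric])
    show "(proj M \<circ> proj N) x \<in> M \<inter> N"
      using proj_in[OF M] proj_in[OF N] comm by (metis IntI comp_apply)
    have "x - proj M (proj N x) = (x - proj N x) + (proj N x - proj M (proj N x))" by simp
    then show "\<forall>m\<in>M \<inter> N. cinner m (x - (proj M \<circ> proj N) x) = 0"
      using proj_orth[OF N] proj_orth[OF M] by (simp only: comp_apply cinner_add_right) simp
  qed
qed

lemma foldr_comp_proj_eq_proj_Inter:
  fixes M :: "nat \<Rightarrow> 'a::chilbert_space set"
  assumes "\<And>i. i \<in> set is \<Longrightarrow> closed_csubspace (M i)"
    and "\<And>i j. i \<in> set is \<Longrightarrow> j \<in> set is \<Longrightarrow> proj (M i) ` M j \<subseteq> M j"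
  shows "foldr (\<circ>) (map (\<lambda>i. proj (M i)) is) id = proj (\<Inter>i\<in>set is. M i)"
  using assms
proof (induction "is")
  case Nil
  show ?case by (simp add: fun_eq_iff proj_UNIV)
next
  case (Cons k "is")
  let ?N = "\<Inter>i\<in>set is. M i"
  have "foldr (\<circ>) (map (\<lambda>i. proj (M i)) is) id = proj ?N"
    using Cons.prems by (intro Cons.IH) auto
  then have "foldr (\<circ>) (map (\<lambda>i. proj (M i)) (k # is)) id = proj (M k) \<circ> proj ?N"
    by simp
  also have "\<dots> = proj (M k \<inter> ?N)"
    using Cons.prems
    by (intro proj_comp_proj_eq_proj_Int closed_csubspace_Inter) (auto, blast)
  also have "M k \<inter> ?N = (\<Inter>i\<in>set (k # is). M i)" by simp
  finally show ?case .
qed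

lemma cspan_superset: "X \<subseteq> cspan X"
  by (auto simp: cspan_def)

lemma csubspace_cspan: "csubspace (cspan X)"
  by (auto simp: cspan_def csubspace_def)

lemma cspan_minimal: "csubspace S \<Longrightarrow> X \<subseteq> S \<Longrightarrow> cspan X \<subseteq> S"
  by (auto simp: cspan_def)

lemma cspan_mono: "X \<subseteq> Y \<Longrightarrow> cspan X \<subseteq> cspan Y"
  by (meson cspan_minimal cspan_superset csubspace_cspan order_trans)

lemma clinear_image_cspan: "clinear f \<Longrightarrow> f ` cspan X \<subseteq> cspan (f ` X)"
proof -
  assume f: "clinear f"
  have "csubspace {x. f x \<in> cspan (f ` X)}"
    using f csubspace_cspan[of "f ` X"]
    by (auto simp: csubspace_def clinear_zero clinear_add clinear_scaleC)
  moreover have "X \<subseteq> {x. f x \<in> cspan (f ` X)}" using cspan_superset[of "f ` X"] by auto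
  ultimately show ?thesis using cspan_minimal by blast
qed

lemma csubspace_closure: "csubspace S \<Longrightarrow> csubspace (closure (S::'a::complex_inner set))"
  unfolding csubspace_def
proof (intro conjI ballI allI)
  assume S: "0 \<in> S \<and> (\<forall>x\<in>S. \<forall>y\<in>S. x + y \<in> S) \<and> (\<forall>c. \<forall>x\<in>S. c *\<^sub>C x \<in> S)"
  then show "0 \<in> closure S" using closure_subset by blast
  fix x y assume "x \<in> closure S" "y \<in> closure S"
  then obtain u v where "\<forall>n. u n \<in> S" "u \<longlonglongrightarrow> x" "\<forall>n. v n \<in> S" "v \<longlonglongrightarrow> y"
    unfolding closure_sequential by blast
  with S show "x + y \<in> closure S"
    unfolding closure_sequential by (intro exI[of _ "\<lambda>n. u n + v n"]) (auto intro: tendsto_add)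
next
  fix c x
  assume S: "0 \<in> S \<and> (\<forall>x\<in>S. \<forall>y\<in>S. x + y \<in> S) \<and> (\<forall>c. \<forall>x\<in>S. c *\<^sub>C x \<in> S)"
    and "x \<in> closure S"
  then obtain u where "\<forall>n. u n \<in> S" "u \<longlonglongrightarrow> x"
    unfolding closure_sequential by blast
  with S show "c *\<^sub>C x \<in> closure S"
    unfolding closure_sequential
    by (intro exI[of _ "\<lambda>n. c *\<^sub>C u n"]) (auto intro: bounded_linear.tendsto[OF bounded_linear_scaleC])
qed

lemma closed_csubspace_ccspan: "closed_csubspace (ccspan (X::'a::complex_inner set))"
  by (simp add: closed_csubspace_def ccspan_def csubspace_closure csubspace_cspan)

lemma ccspan_superset: "X \<subseteq> ccspan X"
  unfolding ccspan_def using cspan_superset closure_subset by blast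

lemma ccspan_minimal: "closed_csubspace S \<Longrightarrow> X \<subseteq> S \<Longrightarrow> ccspan X \<subseteq> S"
  unfolding ccspan_def closed_csubspace_def by (meson closure_minimal cspan_minimal)

lemma orth_ccspan: "orth (ccspan X) = orth (X::'a::complex_inner set)"
proof
  show "orth (ccspan X) \<subseteq> orth X"
    using ccspan_superset by (auto simp: orth_def)
  show "orth X \<subseteq> orth (ccspan X)"
  proof
    fix x assume "x \<in> orth X"
    then have "X \<subseteq> orth {x}" by (auto simp: orth_def cinner_eq_0_commute)
    then have "ccspan X \<subseteq> orth {x}" by (rule ccspan_minimal[OF closed_csubspace_orth])
    then show "x \<in> orth (ccspan X)" by (auto simp: orth_def cinner_eq_0_commute)
  qed
qed

lemma mem_cspan_ranges_of_products:
  fixes P Q :: "nat \<Rightarrow> 'a::complex_vector \<Rightarrow> 'a"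
  assumes "distinct is"
    and "\<And>i. i \<in> set is \<Longrightarrow> clinear (P i)" and "\<And>i. i \<in> set is \<Longrightarrow> clinear (Q i)"
    and "\<And>i x. i \<in> set is \<Longrightarrow> P i x + Q i x = x"
  shows "x \<in> cspan (\<Union>A\<in>Pow (set is). range (foldr (\<circ>) (map (\<lambda>i. if i \<in> A then P i else Q i) is) id))"
  using assms
proof (induction "is" arbitrary: x)
  case Nil
  then show ?case using cspan_superset by fastforce
next
  case (Cons k "is")
  define F where "F js A = foldr (\<circ>) (map (\<lambda>i. if i \<in> A then P i else Q i) js) id" for js A
  define S where "S js = (\<Union>A\<in>Pow (set js). range (F js A))" for js
  have k: "k \<notin> set is" using Cons.prems by simp
  have IH: "y \<in> cspan (S is)" for y
    unfolding S_def F_def using Cons.prems by (intro Cons.IH) auto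
  have F_cong: "F is (insert k A) = F is A" for A
  proof -
    have "map (\<lambda>i. if i \<in> insert k A then P i else Q i) is = map (\<lambda>i. if i \<in> A then P i else Q i) is"
      using k by (intro map_cong) auto
    then show ?thesis unfolding F_def by (rule arg_cong[where f="\<lambda>l. foldr (\<circ>) l id"])
  qed
  have P_maps: "P k ` S is \<subseteq> S (k # is)"
  proof
    fix u assume "u \<in> P k ` S is"
    then obtain A y where "A \<subseteq> set is" and "u = P k (F is A y)" unfolding S_def by blast
    then have "insert k A \<in> Pow (set (k # is))" and "u = F (k # is) (insert k A) y"
      using F_cong[of A] by (auto simp: F_def)
    then show "u \<in> S (k # is)" unfolding S_def by blast
  qed
  have Q_maps: "Q k ` S is \<subseteq> S (k # is)"
  proof
    fix u assume "u \<in> Q k ` S is"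
    then obtain A y where "A \<subseteq> set is" and "u = Q k (F is A y)" unfolding S_def by blast
    then have "A \<in> Pow (set (k # is))" and "u = F (k # is) A y"
      using k by (auto simp: F_def)
    then show "u \<in> S (k # is)" unfolding S_def by blast
  qed
  have "P k x \<in> P k ` cspan (S is)" and "Q k x \<in> Q k ` cspan (S is)" using IH by blast+
  then have "P k x \<in> cspan (S (k # is))" and "Q k x \<in> cspan (S (k # is))"
    using clinear_image_cspan[of "P k" "S is"] clinear_image_cspan[of "Q k" "S is"]
      cspan_mono[OF P_maps] cspan_mono[OF Q_maps] Cons.prems(2,3) by auto
  then have "P k x + Q k x \<in> cspan (S (k # is))" by (rule csubspace_add[OF csubspace_cspan])
  then have "x \<in> cspan (S (k # is))" using Cons.prems(4)[of k x] by simp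
  then show ?case unfolding S_def F_def .
qed

lemma isometry_cinner:
  assumes V: "isometry V" shows "cinner (V x) (V y) = cinner x y"
proof -
  have Re: "Re (cinner (V x) (V y)) = Re (cinner x y)" for x y
  proof -
    have "(norm (V x + V y))\<^sup>2 = (norm (x + y))\<^sup>2"
      using V by (simp add: isometry_def clinear_add[symmetric])
    then show ?thesis using V by (simp add: norm_add_square isometry_def)
  qed
  show ?thesis
  proof (rule complex_eqI)
    show "Re (cinner (V x) (V y)) = Re (cinner x y)" by (rule Re)
    show "Im (cinner (V x) (V y)) = Im (cinner x y)"
      using Re[of "\<i> *\<^sub>C x" y] V by (simp add: isometry_def clinear_scaleC cinner_scaleC_left)
  qed
qed

lemma isometry_funpow: "isometry V \<Longrightarrow> isometry (V ^^ k)"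
  by (induction k) (simp_all add: isometry_def clinear_def)

lemma bounded_linear_isometry: "isometry V \<Longrightarrow> bounded_linear V"
  by (rule bounded_linear_intro[where K = 1])
    (simp_all add: isometry_def clinear_add scaleR_scaleC clinear_scaleC)

lemma closed_csubspace_range_isometry:
  fixes V :: "'a::chilbert_space \<Rightarrow> 'a"
  assumes V: "isometry V" shows "closed_csubspace (range V)"
proof -
  have "closed (range V)"
    unfolding closed_sequential_limits
  proof (intro allI impI, elim conjE)
    fix w l assume w: "\<forall>n. w n \<in> range V" and l: "w \<longlonglongrightarrow> l"
    define u where "u n = inv V (w n)" for n
    have u: "w n = V (u n)" for n using f_inv_into_f[of "w n" V UNIV] w unfolding u_def by simp
    have "norm (w m - w n) = norm (u m - u n)" for m n
      using V u by (simp add: isometry_def clinear_diff[symmetric])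
    then have "Cauchy u" using LIMSEQ_imp_Cauchy[OF l] unfolding Cauchy_iff by simp
    then obtain x where "u \<longlonglongrightarrow> x" using Cauchy_convergent_iff convergent_def by blast
    then have "(\<lambda>n. V (u n)) \<longlonglongrightarrow> V x"
      by (rule bounded_linear.tendsto[OF bounded_linear_isometry[OF V]])
    moreover have "w = (\<lambda>n. V (u n))" using u by auto
    ultimately have "w \<longlonglongrightarrow> V x" by simp
    then show "l \<in> range V" using l LIMSEQ_unique by blast
  qed
  then show ?thesis using V by (simp add: closed_csubspace_def csubspace_range isometry_def)
qed

lemma isometry_adjoint_exists:
  fixes V :: "'a::chilbert_space \<Rightarrow> 'a"
  assumes V: "isometry V"
  shows "\<exists>S. \<forall>x y. cinner (V x) y = cinner x (S y)"
proof -
  let ?R = "range V"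
  have R: "closed_csubspace ?R" by (rule closed_csubspace_range_isometry[OF V])
  define S where "S y = inv V (proj ?R y)" for y
  have S: "V (S y) = proj ?R y" for y
    unfolding S_def using proj_in[OF R] by (simp add: f_inv_into_f)
  have "cinner (V x) y = cinner x (S y)" for x y
  proof -
    have "cinner (V x) (y - proj ?R y) = 0" by (rule proj_orth[OF R]) simp
    then have "cinner (V x) y = cinner (V x) (V (S y))" by (simp add: cinner_diff_right S)
    then show ?thesis by (simp add: isometry_cinner[OF V])
  qed
  then show ?thesis by blast
qed

context
  fixes V :: "'a::chilbert_space \<Rightarrow> 'a"
  assumes V: "isometry V"
begin

lemma cinner_adj_right: "cinner (V x) y = cinner x (adj V y)"
  using someI_ex[OF isometry_adjoint_exists[OF V]] unfolding adj_def by blast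

lemma cinner_adj_left: "cinner y (V x) = cinner (adj V y) x"
  by (metis cinner_adj_right cinner_commute)

lemma adj_eqI: "(\<And>x. cinner (V x) y = cinner x w) \<Longrightarrow> adj V y = w"
  by (rule eq_if_cinner_eq) (metis cinner_adj_right)

lemma adj_isometry_cancel [simp]: "adj V (V x) = x"
  by (rule adj_eqI) (rule isometry_cinner[OF V])

lemma clinear_adj: "clinear (adj V)"
  unfolding clinear_def
  by (auto intro!: adj_eqI simp: cinner_add_right cinner_scaleC_right cinner_adj_right)

lemma ker_adj: "ker (adj V) = orth (range V)"
  unfolding ker_def orth_def by (auto simp: cinner_adj_right intro: adj_eqI)

end

section \<open>The Wold decomposition of a single isometry\<close>

lemma reduces_Inter: "(\<And>j. j \<in> J \<Longrightarrow> reduces (M j) T) \<Longrightarrow> reduces (\<Inter>j\<in>J. M j) T"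
  unfolding reduces_def by blast

context
  fixes V :: "'a::chilbert_space \<Rightarrow> 'a"
  assumes V: "isometry V"
begin

lemma reduces_orth: "reduces M V \<Longrightarrow> reduces (orth M) V"
  unfolding reduces_def orth_def
  by (auto simp: cinner_adj_left[OF V] simp flip: cinner_adj_right[OF V])

lemma proj_commute_if_reduces:
  assumes M: "closed_csubspace M" and r: "reduces M V"
  shows "proj M (V x) = V (proj M x)"
proof -
  have "proj M (V (proj M x)) = V (proj M x)"
    using r proj_in[OF M] by (intro proj_fixed[OF M]) (auto simp: reduces_def)
  moreover have "proj M (V (x - proj M x)) = 0"
    using reduces_orth[OF r] proj_orth_in[OF M]
    by (intro proj_zero_on_orth[OF M]) (auto simp: reduces_def)
  ultimately show ?thesis
    using V by (simp add: isometry_def clinear_diff clinear_diff[OF clinear_proj[OF M]])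
qed

lemma closed_csubspace_Huni: "closed_csubspace (Huni V)"
  unfolding Huni_def
  by (intro closed_csubspace_Inter closed_csubspace_range_isometry isometry_funpow[OF V])

lemma closed_csubspace_Hiso: "closed_csubspace (Hiso V)"
  unfolding Hiso_def by (rule closed_csubspace_ccspan)

lemma orth_ker_adj: "orth (ker (adj V)) = range V"
  using orth_orth[OF closed_csubspace_range_isometry[OF V]] by (simp add: ker_adj[OF V])

lemma funpow_mem_orth_image_iff: "(V ^^ k) y \<in> orth ((V ^^ k) ` S) \<longleftrightarrow> y \<in> orth S"
  by (auto simp: orth_def isometry_cinner[OF isometry_funpow[OF V]])

lemma Huni_eq_orth_Hiso: "Huni V = orth (Hiso V)"
proof -
  have "orth (Hiso V) = orth (\<Union>k. (V ^^ k) ` ker (adj V))"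
    by (simp add: Hiso_def orth_ccspan)
  also have "\<dots> = Huni V"
  proof (intro equalityI subsetI)
    fix x assume x: "x \<in> orth (\<Union>k. (V ^^ k) ` ker (adj V))"
    have "x \<in> range (V ^^ k)" for k
    proof (induction k)
      case (Suc k)
      then obtain y where y: "x = (V ^^ k) y" by blast
      have "x \<in> orth ((V ^^ k) ` ker (adj V))" using x by (auto simp: orth_def)
      then have "y \<in> range V" using funpow_mem_orth_image_iff orth_ker_adj y by simp
      then obtain u where "y = V u" by blast
      then have "x = (V ^^ Suc k) u" using y by (simp only: funpow_Suc_right comp_apply)
      then show ?case by blast
    qed simp
    then show "x \<in> Huni V" by (simp add: Huni_def)
  next
    fix x assume x: "x \<in> Huni V"
    have "x \<in> orth ((V ^^ k) ` ker (adj V))" for k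
    proof -
      obtain u where "x = (V ^^ Suc k) u" using x unfolding Huni_def by blast
      then have "x = (V ^^ k) (V u)" by (simp only: funpow_Suc_right comp_apply)
      then show ?thesis using funpow_mem_orth_image_iff orth_ker_adj by auto
    qed
    then show "x \<in> orth (\<Union>k. (V ^^ k) ` ker (adj V))" by (auto simp: orth_def)
  qed
  finally show ?thesis ..
qed

lemma Hiso_eq_orth_Huni: "Hiso V = orth (Huni V)"
  using orth_orth[OF closed_csubspace_Hiso] Huni_eq_orth_Hiso by simp

lemma proj_Hiso: "proj (Hiso V) x = x - proj (Huni V) x"
  using proj_orth_complement[OF closed_csubspace_Huni] Hiso_eq_orth_Huni by simp

lemma Huni_subset_range: "Huni V \<subseteq> range V"
  unfolding Huni_def using INT_lower[of 1 UNIV "\<lambda>k. range (V ^^ k)"] by simp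

lemma funpow_intertwining:
  assumes T: "clinear T" and TV: "\<And>y. T (V y) = V (c *\<^sub>C T y)"
  shows "T ((V ^^ k) y) = (V ^^ k) ((c ^ k) *\<^sub>C T y)"
proof (induction k)
  case (Suc k)
  have "T ((V ^^ Suc k) y) = V (c *\<^sub>C (V ^^ k) ((c ^ k) *\<^sub>C T y))" by (simp add: TV Suc)
  also have "\<dots> = (V ^^ Suc k) ((c ^ Suc k) *\<^sub>C T y)"
    using isometry_funpow[OF V, of k]
    by (simp add: isometry_def clinear_scaleC scaleC_scaleC funpow_swap1)
  finally show ?case .
qed simp

lemma Huni_invariant:
  assumes "clinear T" and "\<And>y. T (V y) = V (c *\<^sub>C T y)"
  shows "T ` Huni V \<subseteq> Huni V"
proof (intro image_subsetI)
  fix x assume x: "x \<in> Huni V"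
  have "T x \<in> range (V ^^ k)" for k
  proof -
    obtain y where "x = (V ^^ k) y" using x unfolding Huni_def by blast
    then have "T x = (V ^^ k) ((c ^ k) *\<^sub>C T y)" by (simp add: funpow_intertwining[OF assms])
    then show ?thesis by simp
  qed
  then show "T x \<in> Huni V" by (simp add: Huni_def)
qed

lemma reduces_Huni: "reduces (Huni V) V"
  unfolding reduces_def Huni_def
proof (intro conjI image_subsetI INT_I)
  fix x k assume x: "x \<in> (\<Inter>k. range (V ^^ k))"
  obtain y where "x = (V ^^ k) y" using x by blast
  then have "V x = (V ^^ k) (V y)" by (simp add: funpow_swap1)
  then show "V x \<in> range (V ^^ k)" by simp
  obtain z where "x = (V ^^ Suc k) z" using x by blast
  then have "adj V x = (V ^^ k) z" by (simp add: adj_isometry_cancel[OF V])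
  then show "adj V x \<in> range (V ^^ k)" by simp
qed

lemma unitary_on_imp_subset_Huni: "unitary_on V L \<Longrightarrow> L \<subseteq> Huni V"
proof -
  assume u: "unitary_on V L"
  have "L \<subseteq> range (V ^^ k)" for k
  proof (induction k)
    case (Suc k)
    have "L = V ` L" using u by (simp add: unitary_on_def)
    also have "\<dots> \<subseteq> V ` range (V ^^ k)" using Suc by blast
    also have "\<dots> \<subseteq> range (V ^^ Suc k)" by auto
    finally show ?case .
  qed simp
  then show ?thesis by (auto simp: Huni_def)
qed

lemma unitary_on_iff_subset_Huni:
  assumes r: "reduces L V"
  shows "unitary_on V L \<longleftrightarrow> L \<subseteq> Huni V"
proof
  assume L: "L \<subseteq> Huni V"
  have "L \<subseteq> V ` L"
  proof
    fix x assume x: "x \<in> L"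
    then obtain y where y: "x = V y" using L Huni_subset_range by blast
    then have "y = adj V x" by (simp add: adj_isometry_cancel[OF V])
    then show "x \<in> V ` L" using r x y by (auto simp: reduces_def)
  qed
  then show "unitary_on V L" using r by (auto simp: unitary_on_def reduces_def)
qed (rule unitary_on_imp_subset_Huni)

lemma proj_Wold_invariant:
  assumes M: "closed_csubspace M" and r: "reduces M V"
  shows "proj M ` Huni V \<subseteq> Huni V" and "proj M ` Hiso V \<subseteq> Hiso V"
proof -
  show Huni: "proj M ` Huni V \<subseteq> Huni V"
    using proj_commute_if_reduces[OF M r]
    by (intro Huni_invariant[of _ 1] clinear_proj[OF M]) simp
  show "proj M ` Hiso V \<subseteq> Hiso V"
    unfolding Hiso_eq_orth_Huni by (rule proj_orth_invariant[OF M Huni])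
qed

lemma pure_on_iff_subset_Hiso:
  assumes L: "closed_csubspace L" and r: "reduces L V"
  shows "pure_on V L \<longleftrightarrow> L \<subseteq> Hiso V"
proof
  assume p: "pure_on V L"
  \<comment> \<open>the unitary part \<open>L \<inter> H\<^sup>u\<^sup>n\<^sup>i(V)\<close> of \<open>L\<close> vanishes by purity\<close>
  have red: "reduces (L \<inter> Huni V) V" using r reduces_Huni by (auto simp: reduces_def)
  then have "unitary_on V (L \<inter> Huni V)" using unitary_on_iff_subset_Huni by blast
  then have "L \<inter> Huni V = {0}"
    using p closed_csubspace_Int[OF L closed_csubspace_Huni] red
    unfolding pure_on_def reduces_def by blast
  show "L \<subseteq> Hiso V"
  proof
    fix x assume x: "x \<in> L"
    have "proj (Huni V) (proj L x) = proj L (proj (Huni V) x)"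
      by (rule proj_commute_if_invariant[OF closed_csubspace_Huni L proj_Wold_invariant(1)[OF L r]])
    then have "proj (Huni V) x = proj L (proj (Huni V) x)" by (simp only: proj_fixed[OF L x])
    then have "proj (Huni V) x \<in> L \<inter> Huni V"
      using proj_in[OF L] proj_in[OF closed_csubspace_Huni] by (metis IntI)
    then have "proj (Hiso V) x = x" using \<open>L \<inter> Huni V = {0}\<close> by (simp add: proj_Hiso)
    then show "x \<in> Hiso V" by (metis proj_in[OF closed_csubspace_Hiso])
  qed
next
  assume L: "L \<subseteq> Hiso V"
  have "M = {0}" if M: "closed_csubspace M" "M \<subseteq> L" "unitary_on V M" for M
  proof -
    have "M \<subseteq> Hiso V \<inter> orth (Hiso V)"
      using M unitary_on_imp_subset_Huni L Huni_eq_orth_Hiso by blast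
    moreover have "0 \<in> M" using M(1) by (simp add: closed_csubspace_def csubspace_0)
    ultimately show ?thesis using orth_Int_zero by blast
  qed
  then show "pure_on V L" using r by (auto simp: pure_on_def reduces_def)
qed

end

section \<open>Doubly non-commuting tuples\<close>

lemma set_upt_1_Suc: "set [1..<Suc n] = {1..n}"
  by auto

lemma isometries_commute_up_to_scalar:
  fixes V W :: "'a::chilbert_space \<Rightarrow> 'a"
  assumes V: "isometry V" and W: "isometry W" and c: "cmod c = 1"
    and VW: "\<And>x. adj V (W x) = cnj c *\<^sub>C W (adj V x)"
    and WV: "\<And>x. adj W (V x) = c *\<^sub>C V (adj W x)"
  shows "V (W x) = c *\<^sub>C W (V x)"
proof -
  define D where "D = c *\<^sub>C W (V x) - V (W x)"
  have "c * cnj c = 1" using c complex_norm_square[of c] by simp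
  then have "adj V D = 0"
    using VW[of "V x"] by (simp add: D_def clinear_diff[OF clinear_adj[OF V]]
        clinear_scaleC[OF clinear_adj[OF V]] adj_isometry_cancel[OF V] scaleC_scaleC)
  moreover have "adj W D = 0"
    using WV[of "W x"] by (simp add: D_def clinear_diff[OF clinear_adj[OF W]]
        clinear_scaleC[OF clinear_adj[OF W]] adj_isometry_cancel[OF W])
  \<comment> \<open>so \<open>D\<close> is orthogonal to both terms of its own definition\<close>
  ultimately have "cinner D (W (V x)) = 0" and "cinner D (V (W x)) = 0"
    using cinner_adj_left[OF W, of D "V x"] cinner_adj_left[OF V, of D "W x"] by simp_all
  then have "cinner D D = 0"
    by (subst (2) D_def) (simp add: cinner_diff_right cinner_scaleC_right)
  then show ?thesis by (simp add: D_def)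
qed

lemma reduces_Huni_if_intertwining:
  fixes V W :: "'a::chilbert_space \<Rightarrow> 'a"
  assumes V: "isometry V" and W: "isometry W"
    and "\<And>y. W (V y) = V (a *\<^sub>C W y)" and "\<And>y. adj W (V y) = V (b *\<^sub>C adj W y)"
  shows "reduces (Huni V) W"
proof -
  have "W ` Huni V \<subseteq> Huni V"
    using W assms(3) by (intro Huni_invariant[OF V]) (auto simp: isometry_def)
  moreover have "adj W ` Huni V \<subseteq> Huni V"
    using assms(4) by (intro Huni_invariant[OF V] clinear_adj[OF W])
  ultimately show ?thesis by (simp add: reduces_def)
qed

locale doubly_noncommuting_tuple =
  fixes n :: nat and z :: "nat \<Rightarrow> nat \<Rightarrow> complex" and V :: "nat \<Rightarrow> 'a::chilbert_space \<Rightarrow> 'a"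
  assumes z_circle: "\<forall>i\<in>{1..n}. \<forall>j\<in>{1..n}. i \<noteq> j \<longrightarrow> cmod (z i j) = 1"
    and z_sym: "\<forall>i\<in>{1..n}. \<forall>j\<in>{1..n}. i \<noteq> j \<longrightarrow> z j i = cnj (z i j)"
    and dnc: "doubly_noncommuting n z V"
begin

lemma isometry_V: "i \<in> {1..n} \<Longrightarrow> isometry (V i)"
  using dnc by (simp add: doubly_noncommuting_def)

lemma adj_V_V_commute:
  "i \<in> {1..n} \<Longrightarrow> j \<in> {1..n} \<Longrightarrow> i \<noteq> j \<Longrightarrow> adj (V i) (V j x) = cnj (z i j) *\<^sub>C V j (adj (V i) x)"
  using dnc by (simp add: doubly_noncommuting_def)

lemma V_V_commute:
  assumes i: "i \<in> {1..n}" and j: "j \<in> {1..n}" and ij: "i \<noteq> j"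
  shows "V i (V j x) = z i j *\<^sub>C V j (V i x)"
proof (rule isometries_commute_up_to_scalar[OF isometry_V[OF i] isometry_V[OF j]])
  show "cmod (z i j) = 1" using z_circle i j ij by blast
  show "adj (V i) (V j x) = cnj (z i j) *\<^sub>C V j (adj (V i) x)" for x by (rule adj_V_V_commute[OF i j ij])
  have "z j i = cnj (z i j)" using z_sym i j ij by blast
  then have "cnj (z j i) = z i j" by simp
  then show "adj (V j) (V i x) = z i j *\<^sub>C V i (adj (V j) x)" for x
    using adj_V_V_commute[OF j i] ij by simp
qed

lemma reduces_Huni_V:
  assumes i: "i \<in> {1..n}" and j: "j \<in> {1..n}"
  shows "reduces (Huni (V i)) (V j)"
proof (cases "i = j")
  case True
  then show ?thesis using reduces_Huni[OF isometry_V[OF j]] by simp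
next
  case False
  have Vi: "clinear (V i)" using isometry_V[OF i] by (simp add: isometry_def)
  show ?thesis
  proof (rule reduces_Huni_if_intertwining[OF isometry_V[OF i] isometry_V[OF j]])
    show "V j (V i y) = V i (z j i *\<^sub>C V j y)" for y
      using V_V_commute[OF j i] False by (simp add: clinear_scaleC[OF Vi])
    show "adj (V j) (V i y) = V i (cnj (z j i) *\<^sub>C adj (V j) y)" for y
      using adj_V_V_commute[OF j i] False by (simp add: clinear_scaleC[OF Vi])
  qed
qed

lemma reduces_Hiso_V: "i \<in> {1..n} \<Longrightarrow> j \<in> {1..n} \<Longrightarrow> reduces (Hiso (V i)) (V j)"
  using reduces_orth[OF isometry_V reduces_Huni_V] Hiso_eq_orth_Huni[OF isometry_V] by simp

definition wold_part :: "nat set \<Rightarrow> nat \<Rightarrow> 'a set" where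
  "wold_part A i = (if i \<in> A then Hiso (V i) else Huni (V i))"

lemma closed_csubspace_wold_part: "i \<in> {1..n} \<Longrightarrow> closed_csubspace (wold_part A i)"
  by (simp add: wold_part_def closed_csubspace_Hiso closed_csubspace_Huni isometry_V)

lemma reduces_wold_part: "i \<in> {1..n} \<Longrightarrow> j \<in> {1..n} \<Longrightarrow> reduces (wold_part A i) (V j)"
  by (simp add: wold_part_def reduces_Hiso_V reduces_Huni_V)

lemma proj_wold_part_invariant:
  assumes "i \<in> {1..n}" and "j \<in> {1..n}"
  shows "proj (wold_part A i) ` wold_part B j \<subseteq> wold_part B j"
  using proj_Wold_invariant[OF isometry_V closed_csubspace_wold_part reduces_wold_part]
    assms by (simp add: wold_part_def[of B])

lemma P_set_eq_proj_Inter: "P_set n V A = proj (\<Inter>i\<in>{1..n}. wold_part A i)"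
proof -
  have "(\<lambda>i. if i \<in> A then proj (Hiso (V i)) else proj (Huni (V i))) = (\<lambda>i. proj (wold_part A i))"
    by (auto simp: wold_part_def)
  then have "P_set n V A = foldr (\<circ>) (map (\<lambda>i. proj (wold_part A i)) [1..<Suc n]) id"
    by (simp add: P_set_def)
  also have "\<dots> = proj (\<Inter>i\<in>set [1..<Suc n]. wold_part A i)"
    by (rule foldr_comp_proj_eq_proj_Inter)
      (simp_all only: set_upt_1_Suc closed_csubspace_wold_part proj_wold_part_invariant)
  finally show ?thesis by (simp only: set_upt_1_Suc)
qed

lemma H_set_eq_Inter_wold_part: "H_set n V A = (\<Inter>i\<in>{1..n}. wold_part A i)"
  unfolding H_set_def P_set_eq_proj_Inter
  by (intro range_proj closed_csubspace_Inter closed_csubspace_wold_part)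

lemma closed_csubspace_H_set: "closed_csubspace (H_set n V A)"
  unfolding H_set_eq_Inter_wold_part by (intro closed_csubspace_Inter closed_csubspace_wold_part)

lemma H_set_subset_wold_part: "i \<in> {1..n} \<Longrightarrow> H_set n V A \<subseteq> wold_part A i"
  unfolding H_set_eq_Inter_wold_part by blast

lemma H_set_eq_Inter_Hiso_Huni:
  "A \<subseteq> {1..n} \<Longrightarrow> H_set n V A = (\<Inter>i\<in>A. Hiso (V i)) \<inter> (\<Inter>i\<in>{1..n} - A. Huni (V i))"
  unfolding H_set_eq_Inter_wold_part wold_part_def by (auto split: if_splits)

lemma reduces_H_set: "i \<in> {1..n} \<Longrightarrow> reduces (H_set n V A) (V i)"
  unfolding H_set_eq_Inter_wold_part by (intro reduces_Inter reduces_wold_part)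

lemma orthogonal_sets_H_set:
  assumes A: "A \<subseteq> {1..n}" and B: "B \<subseteq> {1..n}" and AB: "A \<noteq> B"
  shows "orthogonal_sets (H_set n V A) (H_set n V B)"
proof -
  \<comment> \<open>some index \<open>i\<close> lies in exactly one of \<open>A\<close>, \<open>B\<close>, so the \<open>i\<close>-th factors are complementary\<close>
  obtain i where i: "i \<in> {1..n}" and iAB: "(i \<in> A) \<noteq> (i \<in> B)" using A B AB by blast
  have "wold_part B i = orth (wold_part A i)"
    using iAB Huni_eq_orth_Hiso[OF isometry_V[OF i]] Hiso_eq_orth_Huni[OF isometry_V[OF i]]
    by (auto simp: wold_part_def)
  then show ?thesis
    using H_set_subset_wold_part[OF i, of A] H_set_subset_wold_part[OF i, of B]
    by (auto simp: orthogonal_sets_def orth_def)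
qed

lemma ccspan_H_set_eq_UNIV: "ccspan (\<Union>A\<in>Pow {1..n}. H_set n V A) = UNIV"
proof -
  have "x \<in> cspan (\<Union>A\<in>Pow (set [1..<Suc n]).
      range (foldr (\<circ>) (map (\<lambda>i. if i \<in> A then proj (Hiso (V i)) else proj (Huni (V i))) [1..<Suc n]) id))"
    for x
    using isometry_V
    by (intro mem_cspan_ranges_of_products)
      (auto simp: set_upt_1_Suc proj_Hiso clinear_proj closed_csubspace_Hiso closed_csubspace_Huni)
  then have "x \<in> cspan (\<Union>A\<in>Pow {1..n}. H_set n V A)" for x
    unfolding set_upt_1_Suc H_set_def P_set_def .
  then show ?thesis unfolding ccspan_def using closure_subset by blast
qed

lemma reducing_subspace_iff_subset_H_set:
  assumes L: "closed_csubspace L" and r: "\<forall>i\<in>{1..n}. reduces L (V i)" and A: "A \<subseteq> {1..n}"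
  shows "((\<forall>i\<in>A. pure_on (V i) L) \<and> (\<forall>i\<in>{1..n} - A. unitary_on (V i) L)) \<longleftrightarrow> L \<subseteq> H_set n V A"
proof -
  have "(\<forall>i\<in>A. pure_on (V i) L) \<longleftrightarrow> (\<forall>i\<in>A. L \<subseteq> Hiso (V i))"
    using A r pure_on_iff_subset_Hiso[OF isometry_V L] by blast
  moreover have "(\<forall>i\<in>{1..n} - A. unitary_on (V i) L) \<longleftrightarrow> (\<forall>i\<in>{1..n} - A. L \<subseteq> Huni (V i))"
    using r unitary_on_iff_subset_Huni[OF isometry_V] by blast
  ultimately show ?thesis unfolding H_set_eq_Inter_Hiso_Huni[OF A] by blast
qed

lemma pure_on_H_set: "A \<subseteq> {1..n} \<Longrightarrow> i \<in> A \<Longrightarrow> pure_on (V i) (H_set n V A)"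
  using reducing_subspace_iff_subset_H_set[OF closed_csubspace_H_set] reduces_H_set by blast

lemma unitary_on_H_set: "A \<subseteq> {1..n} \<Longrightarrow> i \<in> {1..n} - A \<Longrightarrow> unitary_on (V i) (H_set n V A)"
  using reducing_subspace_iff_subset_H_set[OF closed_csubspace_H_set] reduces_H_set by blast

lemma subset_H_set_iff_proj:
  "closed_csubspace L \<Longrightarrow> L \<subseteq> H_set n V A \<longleftrightarrow> proj L \<circ> P_set n V A = proj L"
  using proj_subset_iff[OF _ closed_csubspace_H_set]
  by (simp add: P_set_eq_proj_Inter H_set_eq_Inter_wold_part)

end

theorem theorem3p4:
  fixes n :: nat
    and z :: "nat \<Rightarrow> nat \<Rightarrow> complex"
    and V :: "nat \<Rightarrow> 'a::chilbert_space \<Rightarrow> 'a"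
  assumes n_pos: "n \<ge> 1"
    and z_circle: "\<forall>i\<in>{1..n}. \<forall>j\<in>{1..n}. i \<noteq> j \<longrightarrow> cmod (z i j) = 1"
    and z_sym: "\<forall>i\<in>{1..n}. \<forall>j\<in>{1..n}. i \<noteq> j \<longrightarrow> z j i = cnj (z i j)"
    and dnc: "doubly_noncommuting n z V"
  shows
    "(\<forall>A\<subseteq>{1..n}. H_set n V A = (\<Inter>i\<in>A. Hiso (V i)) \<inter> (\<Inter>i\<in>{1..n} - A. Huni (V i)))
     \<and> (\<forall>A\<subseteq>{1..n}. \<forall>B\<subseteq>{1..n}. A \<noteq> B \<longrightarrow> orthogonal_sets (H_set n V A) (H_set n V B))
     \<and> ccspan (\<Union>A\<in>Pow {1..n}. H_set n V A) = UNIV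
     \<and> (\<forall>A\<subseteq>{1..n}. \<forall>i\<in>{1..n}. reduces (H_set n V A) (V i))
     \<and> (\<forall>A\<subseteq>{1..n}. \<forall>i\<in>{1..n}.
          (i \<in> A \<longrightarrow> pure_on (V i) (H_set n V A)) \<and> (i \<notin> A \<longrightarrow> unitary_on (V i) (H_set n V A)))
     \<and> (\<forall>L A. closed_csubspace L \<and> (\<forall>i\<in>{1..n}. reduces L (V i)) \<and> A \<subseteq> {1..n} \<longrightarrow>
          (((\<forall>i\<in>A. pure_on (V i) L) \<and> (\<forall>i\<in>{1..n} - A. unitary_on (V i) L))
             \<longleftrightarrow> L \<subseteq> H_set n V A)
          \<and> (L \<subseteq> H_set n V A \<longleftrightarrow> proj L \<circ> P_set n V A = proj L))"
proof -
  interpret doubly_noncommuting_tuple n z V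
    using z_circle z_sym dnc by unfold_locales
  show ?thesis
    by (intro conjI allI impI ballI; (elim conjE)?;
        rule H_set_eq_Inter_Hiso_Huni orthogonal_sets_H_set ccspan_H_set_eq_UNIV reduces_H_set
          pure_on_H_set unitary_on_H_set reducing_subspace_iff_subset_H_set subset_H_set_iff_proj) auto
qed

end
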